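(* Let $C,D$ be cones together with a non-singular bilinear map $\langle\cdot,\cdot\rangle\colon C\times D\to\overline{\mathbb{R}}_+$, and equip $D$ with the weak upper topology $w(D,C)$. Then every sublinear functional $\psi\colon D\to\overline{\mathbb{R}}_+$ which is lower semicontinuous with respect to $w(D,C)$ is the pointwise supremum of the functionals $\widehat x$ lying below it: for every $y\in D$, \[\psi(y)=\sup\{\langle x,y\rangle\mid x\in C,\ \langle x,z\rangle\le\psi(z)\text{ for all }z\in D\}.\]
   Context: $\overline{\mathbb{R}}_+=[0,+\infty)\cup\{+\infty\}$ with extended arithmetic ($r+\infty=+\infty$, $r\cdot\infty=\infty$ for $r>0$, $0\cdot\infty=0$), equipped with the upper topology, whose open sets are $\emptyset$, $\overline{\mathbb{R}}_+$ and the intervals $]r,+\infty]$, $r\in[0,\infty)$; lower semicontinuous means continuous for this topology. A cone is a commutative monoid with a scalar multiplication by $[0,\infty)$ satisfying $r(x+y)=rx+ry$, $(r+s)x=rx+sx$, $(rs)x=r(sx)$, $1x=x$, $0x=0$. A functional $\psi\colon D\to\overline{\mathbb{R}}_+$ is sublinear if $\psi(ry)=r\psi(y)$ for all $r\in[0,\infty)$ and $\psi(y+z)\le\psi(y)+\psi(z)$. A bilinear map is one additive and homogeneous in each argument separately; it is non-singular if for $y\ne y'$ in $D$ there is $x\in C$ with $\langle x,y\rangle\ne\langle x,y'\rangle$. For $x\in C$, $\widehat x(y)=\langle x,y\rangle$. The weak upper topology $w(D,C)$ is the coarsest topology on $D$ making all $\widehat x$, $x\in C$, lower semicontinuous. The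 supremum of the empty set is $0$. *)

theory Defs
  imports "HOL-Analysis.Analysis"
begin

text \<open>Cones: a commutative monoid (add, zero) with a scalar multiplication by
  nonnegative reals (smul; only its values at r \<ge> 0 matter).\<close>
definition is_cone :: "('a \<Rightarrow> 'a \<Rightarrow> 'a) \<Rightarrow> 'a \<Rightarrow> (real \<Rightarrow> 'a \<Rightarrow> 'a) \<Rightarrow> bool" where
  "is_cone add zero smul \<longleftrightarrow>
     (\<forall>x y z. add (add x y) z = add x (add y z)) \<and>
     (\<forall>x y. add x y = add y x) \<and>
     (\<forall>x. add zero x = x) \<and>
     (\<forall>r x y. r \<ge> 0 \<longrightarrow> smul r (add x y) = add (smul r x) (smul r y)) \<and>
     (\<forall>r s x. r \<ge> 0 \<longrightarrow> s \<ge> 0 \<longrightarrow> smul (r + s) x = add (smul r x) (smul s x)) \<and>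
     (\<forall>r s x. r \<ge> 0 \<longrightarrow> s \<ge> 0 \<longrightarrow> smul (r * s) x = smul r (smul s x)) \<and>
     (\<forall>x. smul 1 x = x) \<and>
     (\<forall>x. smul 0 x = zero)"

definition is_bilinear ::
  "('c \<Rightarrow> 'c \<Rightarrow> 'c) \<Rightarrow> (real \<Rightarrow> 'c \<Rightarrow> 'c) \<Rightarrow> ('d \<Rightarrow> 'd \<Rightarrow> 'd) \<Rightarrow> (real \<Rightarrow> 'd \<Rightarrow> 'd)
   \<Rightarrow> ('c \<Rightarrow> 'd \<Rightarrow> ennreal) \<Rightarrow> bool" where
  "is_bilinear addC smultC addD smultD pair \<longleftrightarrow>
     (\<forall>x x' y. pair (addC x x') y = pair x y + pair x' y) \<and>
     (\<forall>r x y. r \<ge> 0 \<longrightarrow> pair (smultC r x) y = ennreal r * pair x y) \<and>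
     (\<forall>x y y'. pair x (addD y y') = pair x y + pair x y') \<and>
     (\<forall>r x y. r \<ge> 0 \<longrightarrow> pair x (smultD r y) = ennreal r * pair x y)"

definition non_singular :: "('c \<Rightarrow> 'd \<Rightarrow> ennreal) \<Rightarrow> bool" where
  "non_singular pair \<longleftrightarrow> (\<forall>y y'. y \<noteq> y' \<longrightarrow> (\<exists>x. pair x y \<noteq> pair x y'))"

definition upper_open :: "ennreal set \<Rightarrow> bool" where
  "upper_open U \<longleftrightarrow> U = {} \<or> U = UNIV \<or> (\<exists>r::real. r \<ge> 0 \<and> U = {ennreal r <..})"

text \<open>Lower semicontinuity = continuity into the upper topology.\<close>
definition lsc_upper :: "'a topology \<Rightarrow> ('a \<Rightarrow> ennreal) \<Rightarrow> bool" where
  "lsc_upper T f \<longleftrightarrow> (\<forall>U. upper_open U \<longrightarrow> openin T (f -` U \<inter> topspace T))"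

definition weak_upper_topology :: "('c \<Rightarrow> 'd \<Rightarrow> ennreal) \<Rightarrow> 'd topology" where
  "weak_upper_topology pair =
     topology_generated_by {(\<lambda>y. pair x y) -` U | x U. upper_open U}"

definition sublinear ::
  "('d \<Rightarrow> 'd \<Rightarrow> 'd) \<Rightarrow> (real \<Rightarrow> 'd \<Rightarrow> 'd) \<Rightarrow> ('d \<Rightarrow> ennreal) \<Rightarrow> bool" where
  "sublinear addD smultD \<psi> \<longleftrightarrow>
     (\<forall>r y. r \<ge> 0 \<longrightarrow> \<psi> (smultD r y) = ennreal r * \<psi> y) \<and>
     (\<forall>y z. \<psi> (addD y z) \<le> \<psi> y + \<psi> z)"

end

theory Submission
  imports Defs
begin

text \<open>
  That the supremum is at most \<open>\<psi> y\<close> is immediate. Conversely, let \<open>0 < r < \<psi> y\<close>.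
  By lower semicontinuity, \<open>\<psi> > r\<close> on a basic neighbourhood
  \<open>{z. s\<^sub>i < pair x\<^sub>i z for i \<in> I}\<close> of \<open>y\<close>. On the effective domain \<open>K = {\<psi> < \<infinity>}\<close> the
  functions \<open>f\<^sub>i z = r / s\<^sub>i * pair x\<^sub>i z - \<psi> z\<close>, for those \<open>x\<^sub>i\<close> that are finite on \<open>K\<close>, are
  concave and have no common positive point: a rescaled perturbation of such a point, pushed
  towards a point of \<open>K\<close> where the other \<open>x\<^sub>i\<close> are infinite, would lie in the neighbourhood
  while keeping \<open>\<psi> < r\<close>. The theorem of alternatives of Fan, Glicksberg and Hoffman then gives
  convex weights \<open>\<lambda>\<^sub>i\<close> with \<open>\<Sum> \<lambda>\<^sub>i f\<^sub>i \<le> 0\<close> on \<open>K\<close>, and \<open>x = \<Sum> (\<lambda>\<^sub>i r / s\<^sub>i) x\<^sub>i\<close> is a minorant of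
  \<open>\<psi>\<close> with \<open>pair x y \<ge> r\<close>.
\<close>

lemma ennreal_between_positive_real:
  fixes c a :: ennreal
  assumes "c < a"
  obtains r where "0 < r" "c < ennreal r" "ennreal r < a"
proof -
  obtain q where q: "c < q" "q < a" using dense[OF assms] by blast
  have "0 < q" using zero_le[of c] q(1) by (rule le_less_trans)
  moreover have "q < top" using q(2) top_greatest by (rule less_le_trans)
  ultimately have "0 < enn2real q" "ennreal (enn2real q) = q"
    by (simp_all add: enn2real_positive_iff)
  with q show ?thesis by (intro that[of "enn2real q"]) simp_all
qed

lemma finite_gap_above:
  fixes l :: real
  assumes "finite A" "\<forall>m\<in>A. l < m"
  obtains s where "l < s" "\<forall>m\<in>A. s < m"
proof -
  define m where "m = Min (insert (l + 1) A)"
  have "l < m" "\<forall>a\<in>A. m \<le> a" using assms by (simp_all add: m_def)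
  then have "l < (l + m) / 2" "\<forall>a\<in>A. (l + m) / 2 < a" by auto
  then show ?thesis by (rule that)
qed

lemma sum_ennreal_mult:
  assumes "\<forall>i\<in>A. 0 \<le> a i \<and> 0 \<le> b i"
  shows "(\<Sum>i\<in>A. ennreal (a i) * ennreal (b i)) = ennreal (\<Sum>i\<in>A. a i * b i)"
  using assms by (simp add: ennreal_mult[symmetric] sum_ennreal)

section \<open>A theorem of alternatives for concave functions\<close>

definition convex_wrt :: "(real \<Rightarrow> 'a \<Rightarrow> 'a \<Rightarrow> 'a) \<Rightarrow> 'a set \<Rightarrow> bool" where
  "convex_wrt comb K \<longleftrightarrow> (\<forall>t z w. 0 \<le> t \<longrightarrow> t \<le> 1 \<longrightarrow> z \<in> K \<longrightarrow> w \<in> K \<longrightarrow> comb t z w \<in> K)"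

definition concave_wrt :: "(real \<Rightarrow> 'a \<Rightarrow> 'a \<Rightarrow> 'a) \<Rightarrow> 'a set \<Rightarrow> ('a \<Rightarrow> real) \<Rightarrow> bool" where
  "concave_wrt comb K f \<longleftrightarrow>
     (\<forall>t z w. 0 \<le> t \<longrightarrow> t \<le> 1 \<longrightarrow> z \<in> K \<longrightarrow> w \<in> K \<longrightarrow> t * f z + (1 - t) * f w \<le> f (comb t z w))"

lemma concave_wrtD:
  "concave_wrt comb K f \<Longrightarrow> 0 \<le> t \<Longrightarrow> t \<le> 1 \<Longrightarrow> z \<in> K \<Longrightarrow> w \<in> K \<Longrightarrow>
    t * f z + (1 - t) * f w \<le> f (comb t z w)"
  unfolding concave_wrt_def by blast

lemma convex_wrtD:
  "convex_wrt comb K \<Longrightarrow> 0 \<le> t \<Longrightarrow> t \<le> 1 \<Longrightarrow> z \<in> K \<Longrightarrow> w \<in> K \<Longrightarrow> comb t z w \<in> K"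
  unfolding convex_wrt_def by blast

text \<open>Otherwise the mixture of \<open>z\<close> and \<open>w\<close> with weight
  \<open>t = (g w - f w) / (f z - g z + g w - f w)\<close> would make both \<open>f\<close> and \<open>g\<close> positive.\<close>
lemma concave_cross_bound:
  assumes "convex_wrt comb K" "concave_wrt comb K f" "concave_wrt comb K g"
    and no_common: "\<forall>z\<in>K. \<not> (0 < f z \<and> 0 < g z)"
    and z: "z \<in> K" "0 < f z" and w: "w \<in> K" "0 < g w"
  shows "g w * f z \<le> (- g z) * (- f w)"
proof (rule ccontr)
  define a b c d where "a = f z" "b = - g z" "c = g w" "d = - f w"
  assume "\<not> ?thesis"
  then have gap: "b * d < c * a" using a_b_c_d_def by auto
  have "0 < a" "0 \<le> b" "0 < c" "0 \<le> d" using z w no_common a_b_c_d_def by force+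
  define S where "S = a + b + c + d"
  have "0 < S" using \<open>0 < a\<close> \<open>0 \<le> b\<close> \<open>0 < c\<close> \<open>0 \<le> d\<close> S_def by linarith
  define t where "t = (c + d) / S"
  have t: "0 \<le> t" "t \<le> 1" "1 - t = (a + b) / S"
    using \<open>0 < S\<close> \<open>0 \<le> b\<close> \<open>0 < a\<close> \<open>0 \<le> d\<close> \<open>0 < c\<close> unfolding t_def S_def
    by (auto simp: field_simps)
  have mix_f: "t * a + (1 - t) * (- d) = (c * a - b * d) / S"
   and mix_g: "t * (- b) + (1 - t) * c = (c * a - b * d) / S"
    using \<open>0 < S\<close> unfolding t(3) unfolding t_def by (simp_all add: field_simps)
  have "0 < (c * a - b * d) / S" using gap \<open>0 < S\<close> by simp
  then have "0 < f (comb t z w)" "0 < g (comb t z w)"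
    using concave_wrtD[OF assms(2) t(1,2) z(1) w(1)] concave_wrtD[OF assms(3) t(1,2) z(1) w(1)]
      mix_f mix_g a_b_c_d_def by auto
  moreover have "comb t z w \<in> K" using convex_wrtD[OF assms(1) t(1,2) z(1) w(1)] .
  ultimately show False using no_common by blast
qed

lemma fan_glicksberg_hoffman2:
  assumes "convex_wrt comb K" "concave_wrt comb K f" "concave_wrt comb K g"
    and no_common: "\<forall>z\<in>K. \<not> (0 < f z \<and> 0 < g z)"
  obtains \<mu> where "0 \<le> \<mu>" "\<mu> \<le> 1" "\<forall>z\<in>K. \<mu> * f z + (1 - \<mu>) * g z \<le> 0"
proof (cases "\<exists>w\<in>K. 0 < g w")
  case False
  then show ?thesis by (intro that[of 0]) (auto simp: not_less)
next
  case True
  have f_nonpos: "f w \<le> 0" if "w \<in> K" "0 < g w" for w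
    using no_common that by force
  define L where "L = {g w / (g w - f w) | w. w \<in> K \<and> 0 < g w}"
  have "L \<noteq> {}" using True L_def by auto
  have L_bounds: "0 \<le> l \<and> l \<le> 1" if "l \<in> L" for l
    using that f_nonpos unfolding L_def by (force simp: divide_le_eq_1)
  then have "bdd_above L" by (auto simp: bdd_above_def)
  define \<mu> where "\<mu> = Sup L"
  have \<mu>: "0 \<le> \<mu>" "\<mu> \<le> 1"
    unfolding \<mu>_def using \<open>L \<noteq> {}\<close> L_bounds \<open>bdd_above L\<close>
    by (meson all_not_in_conv cSup_upper2, intro cSup_least, auto)
  have "\<mu> * f z + (1 - \<mu>) * g z \<le> 0" if z: "z \<in> K" for z
  proof -
    consider "0 < g z" | "0 < f z" | "f z \<le> 0" "g z \<le> 0" by force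
    then show ?thesis
    proof cases
      case 1
      have "g z / (g z - f z) \<le> \<mu>"
        unfolding \<mu>_def using z 1 L_def \<open>bdd_above L\<close> by (intro cSup_upper) auto
      then show ?thesis using 1 f_nonpos[OF z 1] by (simp add: field_simps)
    next
      case 2
      have gz: "g z \<le> 0" using no_common z 2 by force
      have "\<mu> \<le> - g z / (f z - g z)"
        unfolding \<mu>_def
      proof (rule cSup_least[OF \<open>L \<noteq> {}\<close>])
        fix l assume "l \<in> L"
        then obtain w where w: "w \<in> K" "0 < g w" "l = g w / (g w - f w)"
          unfolding L_def by blast
        have "g w / (g w - f w) \<le> - g z / (f z - g z)"
          using concave_cross_bound[OF assms z 2 w(1,2)] f_nonpos[OF w(1,2)] w(2) 2 gz
          by (simp add: divide_simps) (simp add: algebra_simps)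
        then show "l \<le> - g z / (f z - g z)" using w(3) by simp
      qed
      then show ?thesis using 2 gz by (simp add: field_simps)
    next
      case 3
      then show ?thesis using \<mu> by (simp add: add_nonpos_nonpos mult_nonneg_nonpos)
    qed
  qed
  then show ?thesis using that \<mu> by blast
qed

lemma fan_glicksberg_hoffman:
  assumes "finite I" "I \<noteq> {}" "convex_wrt comb K" "\<forall>i\<in>I. concave_wrt comb K (f i)"
    and "\<not> (\<exists>z\<in>K. \<forall>i\<in>I. 0 < f i z)"
  shows "\<exists>c. (\<forall>i\<in>I. 0 \<le> c i) \<and> (\<Sum>i\<in>I. c i) = 1 \<and> (\<forall>z\<in>K. (\<Sum>i\<in>I. c i * f i z) \<le> 0)"
  using assms
proof (induction I arbitrary: K rule: finite_ne_induct)
  case (singleton a)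
  then show ?case by (intro exI[of _ "\<lambda>_. 1"]) (auto simp: not_less)
next
  case (insert a I)
  define Ka where "Ka = {z\<in>K. 0 < f a z}"
  have "convex_wrt comb Ka"
  proof (unfold convex_wrt_def, intro allI impI)
    fix t :: real and z w assume t: "0 \<le> t" "t \<le> 1" and zw: "z \<in> Ka" "w \<in> Ka"
    have "0 < t * f a z + (1 - t) * f a w"
      using t zw unfolding Ka_def
      by (cases "t = 0") (auto intro: add_pos_nonneg)
    also have "\<dots> \<le> f a (comb t z w)"
      using insert.prems(2) t zw unfolding Ka_def by (auto intro: concave_wrtD)
    finally show "comb t z w \<in> Ka"
      using convex_wrtD[OF insert.prems(1) t] zw unfolding Ka_def by auto
  qed
  moreover have "\<forall>i\<in>I. concave_wrt comb Ka (f i)"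
    using insert.prems(2) unfolding Ka_def concave_wrt_def by auto
  moreover have "\<not> (\<exists>z\<in>Ka. \<forall>i\<in>I. 0 < f i z)" using insert.prems(3) Ka_def by auto
  ultimately obtain c where c: "\<forall>i\<in>I. 0 \<le> c i" "(\<Sum>i\<in>I. c i) = 1"
      "\<forall>z\<in>Ka. (\<Sum>i\<in>I. c i * f i z) \<le> 0"
    using insert.IH by blast
  define g where "g z = (\<Sum>i\<in>I. c i * f i z)" for z
  have "concave_wrt comb K g"
  proof (unfold concave_wrt_def, intro allI impI)
    fix t :: real and z w assume "0 \<le> t" "t \<le> 1" "z \<in> K" "w \<in> K"
    then have "(\<Sum>i\<in>I. c i * (t * f i z + (1 - t) * f i w)) \<le> g (comb t z w)"
      unfolding g_def using insert.prems(2) c(1)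
      by (intro sum_mono mult_left_mono) (auto intro: concave_wrtD)
    then show "t * g z + (1 - t) * g w \<le> g (comb t z w)"
      unfolding g_def by (simp add: sum_distrib_left sum.distrib[symmetric] algebra_simps)
  qed
  moreover have "\<forall>z\<in>K. \<not> (0 < f a z \<and> 0 < g z)" using c(3) Ka_def g_def by force
  ultimately obtain \<mu> where \<mu>: "0 \<le> \<mu>" "\<mu> \<le> 1" "\<forall>z\<in>K. \<mu> * f a z + (1 - \<mu>) * g z \<le> 0"
    using fan_glicksberg_hoffman2 insert.prems by blast
  define c' where "c' i = (if i = a then \<mu> else (1 - \<mu>) * c i)" for i
  have sum_c': "(\<Sum>i\<in>I. c' i) = (1 - \<mu>) * (\<Sum>i\<in>I. c i)"
    and sum_c'_f: "(\<Sum>i\<in>I. c' i * f i z) = (1 - \<mu>) * g z" for z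
    using insert.hyps unfolding c'_def g_def
    by (auto simp: sum_distrib_left mult.assoc intro!: sum.cong split: if_splits)
  show ?case
  proof (intro exI[of _ c'] conjI ballI)
    fix i assume "i \<in> insert a I"
    then show "0 \<le> c' i" using \<mu> c(1) c'_def by auto
  next
    show "(\<Sum>i\<in>insert a I. c' i) = 1" using insert.hyps sum_c' c(2) c'_def by simp
  next
    fix z assume "z \<in> K"
    then show "(\<Sum>i\<in>insert a I. c' i * f i z) \<le> 0"
      using insert.hyps sum_c'_f \<mu>(3) c'_def by simp
  qed
qed

section \<open>The weak upper topology\<close>

lemma lsc_upper_openin_superlevel:
  assumes "lsc_upper T f" "0 \<le> r"
  shows "openin T {z \<in> topspace T. ennreal r < f z}"
proof -
  have "upper_open {ennreal r<..}" unfolding upper_open_def using assms(2) by blast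
  then have "openin T (f -` {ennreal r<..} \<inter> topspace T)"
    using assms(1) unfolding lsc_upper_def by blast
  then show ?thesis by (simp add: vimage_def Int_def conj_commute)
qed

lemma topspace_weak_upper_topology [simp]: "topspace (weak_upper_topology pair) = UNIV"
proof -
  have "UNIV \<in> {(\<lambda>y. pair x y) -` U | x U. upper_open U}" unfolding upper_open_def by auto
  then show ?thesis unfolding weak_upper_topology_def topology_generated_by_topspace by blast
qed

text \<open>Subbasic open sets \<open>{z. r < pair x z}\<close> with \<open>r = 0\<close> are shrunk to ones with \<open>r > 0\<close>
  around the given point, so that the neighbourhood constraints can be divided by \<open>s\<close>.\<close>
lemma weak_upper_topology_nhds:
  assumes "openin (weak_upper_topology pair) V" "y \<in> V"
  obtains I where "finite I" "\<forall>(x, s)\<in>I. 0 < s \<and> ennreal s < pair x y"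
    "{z. \<forall>(x, s)\<in>I. ennreal s < pair x z} \<subseteq> V"
proof -
  have "generate_topology_on {(\<lambda>y. pair x y) -` U | x U. upper_open U} V"
    using assms(1) unfolding weak_upper_topology_def by (rule openin_topology_generated_by)
  then have "\<exists>I. finite I \<and> (\<forall>(x, s)\<in>I. 0 < s \<and> ennreal s < pair x y) \<and>
      {z. \<forall>(x, s)\<in>I. ennreal s < pair x z} \<subseteq> V"
    using assms(2)
  proof (induction arbitrary: y rule: generate_topology_on.induct)
    case Empty
    then show ?case by simp
  next
    case (Int V W)
    then have "y \<in> V" "y \<in> W" by simp_all
    obtain I where I: "finite I" "\<forall>(x, s)\<in>I. 0 < s \<and> ennreal s < pair x y"
        "{z. \<forall>(x, s)\<in>I. ennreal s < pair x z} \<subseteq> V"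
      using Int.IH(1)[OF \<open>y \<in> V\<close>] by blast
    obtain J where J: "finite J" "\<forall>(x, s)\<in>J. 0 < s \<and> ennreal s < pair x y"
        "{z. \<forall>(x, s)\<in>J. ennreal s < pair x z} \<subseteq> W"
      using Int.IH(2)[OF \<open>y \<in> W\<close>] by blast
    have "finite (I \<union> J)" using I(1) J(1) by simp
    moreover have "\<forall>(x, s)\<in>I \<union> J. 0 < s \<and> ennreal s < pair x y" using I(2) J(2) by blast
    moreover have "{z. \<forall>(x, s)\<in>I \<union> J. ennreal s < pair x z} \<subseteq> V \<inter> W"
      using I(3) J(3) by blast
    ultimately show ?case by blast
  next
    case (UN \<V>)
    from UN.prems obtain V where "V \<in> \<V>" "y \<in> V" by blast
    obtain I where I: "finite I" "\<forall>(x, s)\<in>I. 0 < s \<and> ennreal s < pair x y"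
        "{z. \<forall>(x, s)\<in>I. ennreal s < pair x z} \<subseteq> V"
      using UN.IH[OF \<open>V \<in> \<V>\<close> \<open>y \<in> V\<close>] by blast
    have "{z. \<forall>(x, s)\<in>I. ennreal s < pair x z} \<subseteq> \<Union>\<V>" using I(3) \<open>V \<in> \<V>\<close> by blast
    with I(1,2) show ?case by blast
  next
    case (Basis V)
    then obtain x U where V: "V = (\<lambda>y. pair x y) -` U" "upper_open U" by blast
    then consider "U = {}" | "U = UNIV" | r where "0 \<le> r" "U = {ennreal r<..}"
      unfolding upper_open_def by blast
    then show ?case
    proof cases
      case 1
      then show ?thesis using Basis.prems V by simp
    next
      case 2
      then show ?thesis using V by (intro exI[of _ "{}"]) simp
    next
      case 3
      then have "ennreal r < pair x y" using Basis.prems V by simp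
      then obtain s where "0 < s" "ennreal r < ennreal s" "ennreal s < pair x y"
        by (rule ennreal_between_positive_real)
      moreover have "{z. ennreal s < pair x z} \<subseteq> V"
        using V 3 less_trans[OF \<open>ennreal r < ennreal s\<close>] by auto
      ultimately show ?thesis by (intro exI[of _ "{(x, s)}"]) simp
    qed
  qed
  then show ?thesis by (elim exE conjE) (rule that)
qed

section \<open>Minorants of a sublinear functional\<close>

locale sublinear_pairing =
  fixes addC :: "'c \<Rightarrow> 'c \<Rightarrow> 'c" and smultC :: "real \<Rightarrow> 'c \<Rightarrow> 'c"
    and addD :: "'d \<Rightarrow> 'd \<Rightarrow> 'd" and smultD :: "real \<Rightarrow> 'd \<Rightarrow> 'd"
    and pair :: "'c \<Rightarrow> 'd \<Rightarrow> ennreal" and \<psi> :: "'d \<Rightarrow> ennreal"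
  assumes bilinear: "is_bilinear addC smultC addD smultD pair"
    and sublinear: "sublinear addD smultD \<psi>"
begin

lemma pair_add_left: "pair (addC x x') y = pair x y + pair x' y"
  and pair_smult_left: "0 \<le> r \<Longrightarrow> pair (smultC r x) y = ennreal r * pair x y"
  and pair_add_right: "pair x (addD y y') = pair x y + pair x y'"
  and pair_smult_right: "0 \<le> r \<Longrightarrow> pair x (smultD r y) = ennreal r * pair x y"
  using bilinear unfolding is_bilinear_def by blast+

lemma psi_add: "\<psi> (addD y z) \<le> \<psi> y + \<psi> z"
  and psi_smult: "0 \<le> r \<Longrightarrow> \<psi> (smultD r y) = ennreal r * \<psi> y"
  using sublinear unfolding sublinear_def by blast+

definition psi_dom :: "'d set" where
  "psi_dom = {z. \<psi> z < top}"

lemma zero_in_psi_dom: "smultD 0 y \<in> psi_dom"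
  by (simp add: psi_dom_def psi_smult)

definition mix :: "real \<Rightarrow> 'd \<Rightarrow> 'd \<Rightarrow> 'd" where
  "mix t z v = addD (smultD t z) (smultD (1 - t) v)"

lemma psi_mix_le:
  assumes "0 \<le> t" "t \<le> 1" "z \<in> psi_dom" "v \<in> psi_dom"
  shows "\<psi> (mix t z v) \<le> ennreal (t * enn2real (\<psi> z) + (1 - t) * enn2real (\<psi> v))"
proof -
  have "\<psi> (mix t z v) \<le> \<psi> (smultD t z) + \<psi> (smultD (1 - t) v)"
    unfolding mix_def by (rule psi_add)
  also have "\<dots> = ennreal t * \<psi> z + ennreal (1 - t) * \<psi> v"
    using assms(1,2) by (simp add: psi_smult)
  also have "\<dots> = ennreal (t * enn2real (\<psi> z) + (1 - t) * enn2real (\<psi> v))"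
    using assms by (simp add: psi_dom_def ennreal_mult)
  finally show ?thesis .
qed

lemma convex_wrt_psi_dom: "convex_wrt mix psi_dom"
proof (unfold convex_wrt_def, intro allI impI)
  fix t :: real and z v
  assume "0 \<le> t" "t \<le> 1" "z \<in> psi_dom" "v \<in> psi_dom"
  then have "\<psi> (mix t z v) < top" by (rule le_less_trans[OF psi_mix_le]) simp
  then show "mix t z v \<in> psi_dom" by (simp add: psi_dom_def)
qed

lemma concave_wrt_margin:
  assumes "0 \<le> a" "\<forall>z\<in>psi_dom. pair x z < top"
  shows "concave_wrt mix psi_dom (\<lambda>z. a * enn2real (pair x z) - enn2real (\<psi> z))"
proof (unfold concave_wrt_def, intro allI impI)
  fix t :: real and z v
  assume t: "0 \<le> t" "t \<le> 1" and zv: "z \<in> psi_dom" "v \<in> psi_dom"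
  have pair_mix: "enn2real (pair x (mix t z v)) = t * enn2real (pair x z) + (1 - t) * enn2real (pair x v)"
    using assms(2) t zv
    by (simp add: mix_def pair_add_right pair_smult_right enn2real_plus enn2real_mult ennreal_mult_less_top)
  have psi_mix: "enn2real (\<psi> (mix t z v)) \<le> t * enn2real (\<psi> z) + (1 - t) * enn2real (\<psi> v)"
    using enn2real_mono[OF psi_mix_le[OF t zv]] t by (simp del: ennreal_plus)
  have "t * (a * enn2real (pair x z) - enn2real (\<psi> z)) + (1 - t) * (a * enn2real (pair x v) - enn2real (\<psi> v))
      = a * (t * enn2real (pair x z) + (1 - t) * enn2real (pair x v))
        - (t * enn2real (\<psi> z) + (1 - t) * enn2real (\<psi> v))"
    by (simp add: algebra_simps)
  also have "\<dots> \<le> a * enn2real (pair x (mix t z v)) - enn2real (\<psi> (mix t z v))"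
    unfolding pair_mix using psi_mix by simp
  finally show "t * (a * enn2real (pair x z) - enn2real (\<psi> z)) +
      (1 - t) * (a * enn2real (pair x v) - enn2real (\<psi> v))
    \<le> a * enn2real (pair x (mix t z v)) - enn2real (\<psi> (mix t z v))" .
qed

lemma sum_pair_representable:
  assumes "finite A" "\<forall>i\<in>A. 0 \<le> c i"
  shows "\<exists>x. \<forall>z. pair x z = (\<Sum>i\<in>A. ennreal (c i) * pair (xs i) z)"
  using assms
proof (induction A rule: finite_induct)
  case empty
  show ?case by (intro exI[of _ "smultC 0 x"]) (simp add: pair_smult_left)
next
  case (insert i A)
  then obtain x where x: "\<forall>z. pair x z = (\<Sum>i\<in>A. ennreal (c i) * pair (xs i) z)" by auto
  have "0 \<le> c i" using insert.prems by simp
  with x insert.hyps show ?case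
    by (intro exI[of _ "addC (smultC (c i) (xs i)) x"]) (simp add: pair_add_left pair_smult_left)
qed

lemma common_infinite_point:
  assumes "finite A" "\<forall>x\<in>A. \<exists>v\<in>psi_dom. pair x v = top"
  shows "\<exists>w\<in>psi_dom. \<forall>x\<in>A. pair x w = top"
  using assms
proof (induction A rule: finite_induct)
  case empty
  show ?case using zero_in_psi_dom by blast
next
  case (insert x A)
  then obtain w v where "w \<in> psi_dom" "\<forall>x\<in>A. pair x w = top" "v \<in> psi_dom" "pair x v = top"
    by auto
  moreover have "\<psi> (addD w v) < top"
    using psi_add[of w v] \<open>w \<in> psi_dom\<close> \<open>v \<in> psi_dom\<close>
    by (simp add: psi_dom_def order_le_less_trans ennreal_add_less_top)
  ultimately show ?case by (intro bexI[of _ "addD w v"]) (simp_all add: psi_dom_def pair_add_right)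
qed

lemma sum_pair_le_psi:
  assumes "\<forall>i\<in>A. 0 \<le> a i" "\<forall>i\<in>A. \<forall>v\<in>psi_dom. pair (xs i) v < top"
    and "\<forall>z\<in>psi_dom. (\<Sum>i\<in>A. a i * enn2real (pair (xs i) z)) \<le> enn2real (\<psi> z)"
  shows "(\<Sum>i\<in>A. ennreal (a i) * pair (xs i) z) \<le> \<psi> z"
proof (cases "z \<in> psi_dom")
  case True
  then have "(\<Sum>i\<in>A. ennreal (a i) * pair (xs i) z) = ennreal (\<Sum>i\<in>A. a i * enn2real (pair (xs i) z))"
    using assms(1,2) by (subst sum_ennreal_mult[symmetric]) (auto intro!: sum.cong)
  also have "\<dots> \<le> ennreal (enn2real (\<psi> z))" using assms(3) True by (simp add: ennreal_leI)
  also have "\<dots> = \<psi> z" using True by (simp add: psi_dom_def)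
  finally show ?thesis .
next
  case False
  then have "\<psi> z = top" using top.not_eq_extremum unfolding psi_dom_def by blast
  then show ?thesis by simp
qed

lemma psi_rescaled_perturbation_less:
  assumes z: "z \<in> psi_dom" and w: "w \<in> psi_dom" and "0 < r" "0 < t"
    and "enn2real (\<psi> z) < r * t"
  obtains e where "0 < e" "\<psi> (smultD (1 / t) (addD z (smultD e w))) < ennreal r"
proof -
  define a b where "a = enn2real (\<psi> z)" "b = enn2real (\<psi> w)"
  define e where "e = (r * t - a) / (b + 1)"
  have "0 \<le> a" "0 \<le> b" "a < r * t" using assms(5) by (simp_all add: a_b_def)
  then have "0 < e" "e * (b + 1) = r * t - a" by (simp_all add: e_def)
  then have "a + e * b < r * t" by (simp add: algebra_simps)
  have "\<psi> (smultD (1 / t) (addD z (smultD e w))) = ennreal (1 / t) * \<psi> (addD z (smultD e w))"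
    using \<open>0 < t\<close> by (simp add: psi_smult)
  also have "\<dots> \<le> ennreal (1 / t) * (\<psi> z + \<psi> (smultD e w))"
    by (intro mult_left_mono psi_add) simp
  also have "\<dots> = ennreal (1 / t) * (ennreal a + ennreal e * ennreal b)"
    using z w \<open>0 < e\<close> by (simp add: psi_smult psi_dom_def a_b_def)
  also have "\<dots> = ennreal ((a + e * b) / t)"
    using \<open>0 < t\<close> \<open>0 < e\<close> \<open>0 \<le> a\<close> \<open>0 \<le> b\<close>
    by (simp add: ennreal_mult[symmetric] ennreal_plus[symmetric] del: ennreal_plus)
  also have "\<dots> < ennreal r"
    using \<open>a + e * b < r * t\<close> \<open>0 < t\<close> \<open>0 < r\<close> by (intro ennreal_lessI) (simp_all add: field_simps)
  finally show ?thesis using \<open>0 < e\<close> that by blast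
qed

text \<open>If every margin were positive at \<open>z\<close>, the point \<open>(z + e w) / t\<close>, for a suitable
  scale \<open>t\<close>, small \<open>e > 0\<close> and a point \<open>w\<close> of finite \<open>\<psi>\<close> on which the remaining
  \<open>pair x\<close> are infinite, would lie in the neighbourhood while \<open>\<psi>\<close> stays below \<open>r\<close> there.\<close>
lemma exists_nonpositive_margin:
  assumes "0 < r" "finite I" "\<forall>(x, s)\<in>I. 0 < s"
    and nbhd: "{z. \<forall>(x, s)\<in>I. ennreal s < pair x z} \<subseteq> {z. ennreal r < \<psi> z}"
    and z: "z \<in> psi_dom"
  shows "\<exists>(x, s)\<in>I. (\<forall>v\<in>psi_dom. pair x v < top) \<and> r / s * enn2real (pair x z) \<le> enn2real (\<psi> z)"
proof (rule ccontr)
  assume all_positive: "\<not> ?thesis"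
  define J where "J = {(x, s)\<in>I. \<forall>v\<in>psi_dom. pair x v < top}"
  define a where "a = enn2real (\<psi> z)"
  have "finite J" using assms(2) unfolding J_def by (simp add: case_prod_unfold)
  moreover have "\<forall>m\<in>(\<lambda>(x, s). enn2real (pair x z) / s) ` J. a / r < m"
    using all_positive assms(1,3) unfolding J_def a_def by (force simp: field_simps)
  ultimately obtain t where "a / r < t" "\<forall>m\<in>(\<lambda>(x, s). enn2real (pair x z) / s) ` J. t < m"
    by (meson finite_gap_above finite_imageI)
  then have t: "a / r < t" "\<forall>(x, s)\<in>J. t < enn2real (pair x z) / s" by auto
  have "0 \<le> a" by (simp add: a_def)
  then have "0 < t" using t(1) divide_nonneg_pos[OF _ assms(1)] by (meson le_less_trans)
  have "a < r * t" using t(1) assms(1) by (simp add: field_simps)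
  have "\<exists>v\<in>psi_dom. pair x v = top" if "x \<in> fst ` (I - J)" for x
  proof -
    obtain s where "(x, s) \<in> I" "(x, s) \<notin> J" using \<open>x \<in> fst ` (I - J)\<close> by force
    then obtain v where "v \<in> psi_dom" "\<not> pair x v < top" unfolding J_def by auto
    then show ?thesis using top.not_eq_extremum by blast
  qed
  then obtain w where "w \<in> psi_dom" "\<forall>x\<in>fst ` (I - J). pair x w = top"
    using common_infinite_point[of "fst ` (I - J)"] assms(2) by blast
  then have w: "w \<in> psi_dom" "\<forall>(x, s)\<in>I - J. pair x w = top" by force+
  obtain e where "0 < e" "\<psi> (smultD (1 / t) (addD z (smultD e w))) < ennreal r"
    using psi_rescaled_perturbation_less[OF z w(1) assms(1) \<open>0 < t\<close>] \<open>a < r * t\<close>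
    unfolding a_def by blast
  define z' where "z' = smultD (1 / t) (addD z (smultD e w))"
  have pair_z': "pair x z' = ennreal (1 / t) * (pair x z + ennreal e * pair x w)" for x
    using \<open>0 < t\<close> \<open>0 < e\<close> by (simp add: z'_def pair_add_right pair_smult_right)
  have "\<psi> z' < ennreal r" unfolding z'_def by fact
  then have "z' \<notin> {z. ennreal r < \<psi> z}" by simp
  moreover have "ennreal s < pair x z'" if "(x, s) \<in> I" for x s
  proof (cases "(x, s) \<in> J")
    case True
    have "0 < s" using assms(3) that by auto
    have "t < enn2real (pair x z) / s" using t(2) True by auto
    then have "s < 1 / t * enn2real (pair x z)" using \<open>0 < s\<close> \<open>0 < t\<close> by (simp add: field_simps)
    then have "ennreal s < ennreal (1 / t * enn2real (pair x z))"
      using \<open>0 < s\<close> by (intro ennreal_lessI) auto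
    also have "\<dots> = ennreal (1 / t) * pair x z"
      using True z \<open>0 < t\<close> unfolding J_def by (simp add: ennreal_mult del: times_divide_eq_left)
    also have "\<dots> \<le> pair x z'" unfolding pair_z' by (simp add: mult_left_mono)
    finally show ?thesis .
  next
    case False
    then have "pair x w = top" using w(2) that by auto
    then have "pair x z' = top" using \<open>0 < t\<close> \<open>0 < e\<close> by (simp add: pair_z' ennreal_mult_eq_top_iff)
    then show ?thesis by simp
  qed
  ultimately show False using nbhd by blast
qed

lemma exists_minorant_above:
  assumes "0 < r" "finite I" "\<forall>(x, s)\<in>I. 0 < s \<and> ennreal s < pair x y"
    and nbhd: "{z. \<forall>(x, s)\<in>I. ennreal s < pair x z} \<subseteq> {z. ennreal r < \<psi> z}"
  shows "\<exists>x. (\<forall>z. pair x z \<le> \<psi> z) \<and> ennreal r \<le> pair x y"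
proof -
  define J where "J = {(x, s)\<in>I. \<forall>v\<in>psi_dom. pair x v < top}"
  define f where "f = (\<lambda>(x, s) z. r / s * enn2real (pair x z) - enn2real (\<psi> z))"
  have "finite J" using assms(2) unfolding J_def by (simp add: case_prod_unfold)
  have J: "0 < s" "ennreal s < pair x y" "\<forall>v\<in>psi_dom. pair x v < top" if "(x, s) \<in> J" for x s
    using that assms(3) unfolding J_def by auto
  then have J_pos: "\<forall>p\<in>J. 0 < snd p" by auto
  have no_common_positive: "\<not> (\<exists>z\<in>psi_dom. \<forall>p\<in>J. 0 < f p z)"
    using exists_nonpositive_margin[OF assms(1,2) _ nbhd] assms(3)
    unfolding J_def f_def by (fastforce simp: not_less)
  then have "J \<noteq> {}" using zero_in_psi_dom by blast
  moreover have "\<forall>p\<in>J. concave_wrt mix psi_dom (f p)"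
  proof
    fix p assume "p \<in> J"
    then obtain x s where p: "p = (x, s)" "(x, s) \<in> J" by (cases p) auto
    show "concave_wrt mix psi_dom (f p)"
      unfolding f_def p prod.case using J[OF p(2)] assms(1) by (intro concave_wrt_margin) auto
  qed
  ultimately obtain c where c: "\<forall>p\<in>J. 0 \<le> c p" "(\<Sum>p\<in>J. c p) = 1"
      "\<forall>z\<in>psi_dom. (\<Sum>p\<in>J. c p * f p z) \<le> 0"
    using fan_glicksberg_hoffman[OF \<open>finite J\<close> _ convex_wrt_psi_dom _ no_common_positive] by blast
  define a where "a = (\<lambda>(x, s). c (x, s) * r / s)"
  have a_nonneg: "\<forall>p\<in>J. 0 \<le> a p" using c(1) J(1) assms(1) unfolding a_def by fastforce
  obtain x where x: "\<forall>z. pair x z = (\<Sum>p\<in>J. ennreal (a p) * pair (fst p) z)"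
    using sum_pair_representable[OF \<open>finite J\<close> a_nonneg] by blast
  have "(\<Sum>p\<in>J. a p * enn2real (pair (fst p) z)) \<le> enn2real (\<psi> z)" if "z \<in> psi_dom" for z
  proof -
    have "(\<Sum>p\<in>J. a p * enn2real (pair (fst p) z)) - enn2real (\<psi> z) = (\<Sum>p\<in>J. c p * f p z)"
      using c(2) by (simp add: a_def f_def case_prod_unfold sum_subtractf algebra_simps
          flip: sum_distrib_right)
    then show ?thesis using c(3) that by fastforce
  qed
  then have "pair x z \<le> \<psi> z" for z
    unfolding x[rule_format] using a_nonneg J(3) by (intro sum_pair_le_psi) auto
  moreover have "ennreal r \<le> pair x y"
  proof -
    have "(\<Sum>p\<in>J. a p * snd p) = (\<Sum>p\<in>J. c p) * r"
      unfolding sum_distrib_right using J(1) by (intro sum.cong) (fastforce simp: a_def)+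
    then have "r = (\<Sum>p\<in>J. a p * snd p)" using c(2) by simp
    also have "ennreal \<dots> = (\<Sum>p\<in>J. ennreal (a p) * ennreal (snd p))"
      using a_nonneg J_pos by (subst sum_ennreal_mult) (auto simp: less_imp_le)
    also have "\<dots> \<le> pair x y"
      unfolding x[rule_format] using J(2) by (intro sum_mono mult_left_mono) (force intro: less_imp_le)+
    finally show ?thesis .
  qed
  ultimately show ?thesis by blast
qed

lemma psi_eq_Sup_minorants:
  assumes "lsc_upper (weak_upper_topology pair) \<psi>"
  shows "\<psi> y = Sup {pair x y | x. \<forall>z. pair x z \<le> \<psi> z}"
proof (rule antisym)
  show "\<psi> y \<le> Sup {pair x y | x. \<forall>z. pair x z \<le> \<psi> z}"
  proof (rule dense_le)
    fix c assume "c < \<psi> y"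
    then obtain r where r: "0 < r" "c < ennreal r" "ennreal r < \<psi> y"
      by (rule ennreal_between_positive_real)
    have "openin (weak_upper_topology pair) {z. ennreal r < \<psi> z}"
      using lsc_upper_openin_superlevel[OF assms] r(1) by simp
    moreover have "y \<in> {z. ennreal r < \<psi> z}" using r(3) by simp
    ultimately obtain I where "finite I" "\<forall>(x, s)\<in>I. 0 < s \<and> ennreal s < pair x y"
        "{z. \<forall>(x, s)\<in>I. ennreal s < pair x z} \<subseteq> {z. ennreal r < \<psi> z}"
      by (rule weak_upper_topology_nhds)
    then obtain x where "\<forall>z. pair x z \<le> \<psi> z" "ennreal r \<le> pair x y"
      using exists_minorant_above r(1) by blast
    then show "c \<le> Sup {pair x y | x. \<forall>z. pair x z \<le> \<psi> z}"
      using r(2) by (intro Sup_upper2[of "pair x y"]) auto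
  qed
qed (rule Sup_least, auto)

end

theorem theorem4p3:
  fixes addC :: "'c \<Rightarrow> 'c \<Rightarrow> 'c" and zeroC :: 'c and smultC :: "real \<Rightarrow> 'c \<Rightarrow> 'c"
    and addD :: "'d \<Rightarrow> 'd \<Rightarrow> 'd" and zeroD :: 'd and smultD :: "real \<Rightarrow> 'd \<Rightarrow> 'd"
    and pair :: "'c \<Rightarrow> 'd \<Rightarrow> ennreal" and \<psi> :: "'d \<Rightarrow> ennreal"
  assumes "is_cone addC zeroC smultC"
    and "is_cone addD zeroD smultD"
    and "is_bilinear addC smultC addD smultD pair"
    and "non_singular pair"
    and "sublinear addD smultD \<psi>"
    and "lsc_upper (weak_upper_topology pair) \<psi>"
  shows "\<forall>y. \<psi> y = Sup {pair x y | x. \<forall>z. pair x z \<le> \<psi> z}"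
proof
  fix y
  interpret sublinear_pairing addC smultC addD smultD pair \<psi>
    using assms(3,5) by unfold_locales
  show "\<psi> y = Sup {pair x y | x. \<forall>z. pair x z \<le> \<psi> z}"
    using assms(6) by (rule psi_eq_Sup_minorants)
qed

end
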